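(* Let $(M,d)$ be a bounded metric space such that the family $\mathcal{A}(M)$ of admissible subsets is compact and has normal structure. Then every orbitally wrt nonexpansive mapping $T: M\to M$ has a fixed point in $M$.
   Context: For $x\in M$ and $K\subseteq M$: $r_x(K)=\sup\{d(x,y):y\in K\}$, $r(K)=\inf\{r_x(K):x\in K\}$, $\delta(K)$ is the diameter of $K$. A bounded subset is admissible if it equals the intersection of all closed balls of $M$ containing it. $\mathcal{A}(M)$ is compact if every descending chain of nonempty admissible sets has nonempty intersection; it has normal structure if $r(K)<\delta(K)$ for every $K\in\mathcal{A}(M)$ with $\delta(K)>0$. $O_T(y)=\{y,Ty,T^2y,\dots\}$; $T$ is orbitally wrt nonexpansive if $d(Tx,Ty)\le r_x(O_T(y))$ for all $x,y\in M$. *)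

theory Defs
  imports "HOL-Analysis.Analysis"
begin

definition rad_pt :: "('a \<Rightarrow> 'a \<Rightarrow> real) \<Rightarrow> 'a \<Rightarrow> 'a set \<Rightarrow> real" where
  "rad_pt d x K = Sup {d x y | y. y \<in> K}"

definition cheb_rad :: "('a \<Rightarrow> 'a \<Rightarrow> real) \<Rightarrow> 'a set \<Rightarrow> real" where
  "cheb_rad d K = Inf {rad_pt d x K | x. x \<in> K}"

definition diam :: "('a \<Rightarrow> 'a \<Rightarrow> real) \<Rightarrow> 'a set \<Rightarrow> real" where
  "diam d K = Sup {d x y | x y. x \<in> K \<and> y \<in> K}"

definition bounded_metric :: "'a set \<Rightarrow> ('a \<Rightarrow> 'a \<Rightarrow> real) \<Rightarrow> bool" where
  "bounded_metric M d \<longleftrightarrow> (\<exists>B. \<forall>x\<in>M. \<forall>y\<in>M. d x y \<le> B)"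

definition closed_balls :: "'a set \<Rightarrow> ('a \<Rightarrow> 'a \<Rightarrow> real) \<Rightarrow> 'a set set" where
  "closed_balls M d = {{y \<in> M. d x y \<le> r} | x r. x \<in> M \<and> r \<ge> 0}"

definition admissible :: "'a set \<Rightarrow> ('a \<Rightarrow> 'a \<Rightarrow> real) \<Rightarrow> 'a set \<Rightarrow> bool" where
  "admissible M d A \<longleftrightarrow> A \<subseteq> M \<and> (\<exists>B. \<forall>x\<in>A. \<forall>y\<in>A. d x y \<le> B) \<and>
     A = M \<inter> \<Inter>{C \<in> closed_balls M d. A \<subseteq> C}"

definition adm_compact :: "'a set \<Rightarrow> ('a \<Rightarrow> 'a \<Rightarrow> real) \<Rightarrow> bool" where
  "adm_compact M d \<longleftrightarrow>
     (\<forall>F. F \<noteq> {} \<and> (\<forall>A\<in>F. admissible M d A \<and> A \<noteq> {}) \<and>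
          (\<forall>A\<in>F. \<forall>B\<in>F. A \<subseteq> B \<or> B \<subseteq> A) \<longrightarrow> \<Inter>F \<noteq> {})"

definition adm_normal :: "'a set \<Rightarrow> ('a \<Rightarrow> 'a \<Rightarrow> real) \<Rightarrow> bool" where
  "adm_normal M d \<longleftrightarrow>
     (\<forall>K. admissible M d K \<and> diam d K > 0 \<longrightarrow> cheb_rad d K < diam d K)"

definition orbit :: "('a \<Rightarrow> 'a) \<Rightarrow> 'a \<Rightarrow> 'a set" where
  "orbit T y = range (\<lambda>n. (T ^^ n) y)"

definition orbitally_wrt_nonexpansive :: "'a set \<Rightarrow> ('a \<Rightarrow> 'a \<Rightarrow> real) \<Rightarrow> ('a \<Rightarrow> 'a) \<Rightarrow> bool" where
  "orbitally_wrt_nonexpansive M d T \<longleftrightarrow>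
     (\<forall>x\<in>M. \<forall>y\<in>M. d (T x) (T y) \<le> rad_pt d x (orbit T y))"

end

theory Submission
  imports Defs
begin

(* A minimal nonempty admissible T-invariant set K exists by Zorn's lemma, compactness of the
   admissible family making the intersection of a chain nonempty. By minimality, every closed
   ball containing T(K) contains K, its intersection with K being again invariant. If x is a
   Chebyshev centre of K, the orbital condition gives d(Tx, Ty) <= r_x(O(y)) <= r(K) for y in K,
   so K lies in the ball of radius r(K) about Tx and Tx is again a centre. Hence the Chebyshev
   centres form an invariant admissible subset of K, so all of K; then diam K <= r(K), and normal
   structure leaves only diam K = 0: K is a single fixed point. *)

lemma Zorn_Inter_minimal:
  assumes "\<A> \<noteq> {}"
    and chain_Inter: "\<And>\<C>. \<C> \<noteq> {} \<Longrightarrow> subset.chain \<A> \<C> \<Longrightarrow> \<Inter>\<C> \<in> \<A>"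
  shows "\<exists>K\<in>\<A>. \<forall>X\<in>\<A>. X \<subseteq> K \<longrightarrow> X = K"
proof -
  have "\<exists>N\<in>uminus ` \<A>. \<forall>X\<in>uminus ` \<A>. N \<subseteq> X \<longrightarrow> X = N"
  proof (rule subset_Zorn_nonempty)
    show "uminus ` \<A> \<noteq> {}" using assms(1) by blast
  next
    fix \<C> assume "\<C> \<noteq> {}" "subset.chain (uminus ` \<A>) \<C>"
    then have "uminus ` \<C> \<noteq> {}" "subset.chain \<A> (uminus ` \<C>)"
      by (auto simp: subset_chain_def)
    then have "\<Inter>(uminus ` \<C>) \<in> \<A>" by (rule chain_Inter)
    moreover have "\<Union>\<C> = - \<Inter>(uminus ` \<C>)" by auto
    ultimately show "\<Union>\<C> \<in> uminus ` \<A>" by blast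
  qed
  then show ?thesis by (metis compl_le_compl_iff double_compl image_iff)
qed

lemma admissibleI:
  assumes "A \<subseteq> M" "\<forall>x\<in>A. \<forall>y\<in>A. d x y \<le> B"
    and "\<And>x. x \<in> M \<Longrightarrow> (\<And>C. C \<in> closed_balls M d \<Longrightarrow> A \<subseteq> C \<Longrightarrow> x \<in> C) \<Longrightarrow> x \<in> A"
  shows "admissible M d A"
  unfolding admissible_def using assms by blast

lemma mem_admissibleI:
  assumes "admissible M d A" "x \<in> M" "\<And>C. C \<in> closed_balls M d \<Longrightarrow> A \<subseteq> C \<Longrightarrow> x \<in> C"
  shows "x \<in> A"
  using assms unfolding admissible_def by blast

lemma admissible_Inter:
  assumes "\<F> \<noteq> {}" "\<And>A. A \<in> \<F> \<Longrightarrow> admissible M d A"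
  shows "admissible M d (\<Inter>\<F>)"
proof -
  obtain A where A: "A \<in> \<F>" using assms(1) by blast
  then obtain B where B: "\<forall>x\<in>A. \<forall>y\<in>A. d x y \<le> B"
    using assms(2) unfolding admissible_def by blast
  show ?thesis
  proof (rule admissibleI)
    show "\<Inter>\<F> \<subseteq> M" using A assms(2) unfolding admissible_def by blast
    show "\<forall>x\<in>\<Inter>\<F>. \<forall>y\<in>\<Inter>\<F>. d x y \<le> B" using A B by blast
  next
    fix x assume "x \<in> M" and x: "\<And>C. C \<in> closed_balls M d \<Longrightarrow> \<Inter>\<F> \<subseteq> C \<Longrightarrow> x \<in> C"
    show "x \<in> \<Inter>\<F>"
    proof
      fix A assume "A \<in> \<F>"
      then show "x \<in> A"
        using mem_admissibleI[OF assms(2) \<open>x \<in> M\<close>] x by blast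
    qed
  qed
qed

lemma adm_compactD:
  assumes "adm_compact M d" "\<F> \<noteq> {}" "\<And>A. A \<in> \<F> \<Longrightarrow> admissible M d A \<and> A \<noteq> {}"
    and "\<forall>A\<in>\<F>. \<forall>B\<in>\<F>. A \<subseteq> B \<or> B \<subseteq> A"
  shows "\<Inter>\<F> \<noteq> {}"
  using assms unfolding adm_compact_def by blast

lemma admissible_Int: "admissible M d A \<Longrightarrow> admissible M d B \<Longrightarrow> admissible M d (A \<inter> B)"
  using admissible_Inter[of "{A, B}" M d] by auto

lemma admissible_space: "bounded_metric M d \<Longrightarrow> admissible M d M"
  unfolding admissible_def bounded_metric_def by blast

lemma rad_pt_le:
  assumes "S \<noteq> {}" "\<And>y. y \<in> S \<Longrightarrow> d x y \<le> s"
  shows "rad_pt d x S \<le> s"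
  unfolding rad_pt_def using assms by (intro cSup_least) auto

lemma le_rad_pt:
  assumes "\<forall>u\<in>S. \<forall>v\<in>S. d u v \<le> B" "x \<in> S" "y \<in> S"
  shows "d x y \<le> rad_pt d x S"
  unfolding rad_pt_def
proof (rule cSup_upper)
  show "bdd_above {d x y |y. y \<in> S}" using assms by (auto intro: bdd_aboveI[of _ B])
qed (use assms in blast)

lemma diam_le:
  assumes "S \<noteq> {}" "\<And>x y. x \<in> S \<Longrightarrow> y \<in> S \<Longrightarrow> d x y \<le> s"
  shows "diam d S \<le> s"
  unfolding diam_def using assms by (intro cSup_least) blast+

lemma le_diam:
  assumes "\<forall>u\<in>S. \<forall>v\<in>S. d u v \<le> B" "x \<in> S" "y \<in> S"
  shows "d x y \<le> diam d S"
  unfolding diam_def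
proof (rule cSup_upper)
  show "bdd_above {d x y |x y. x \<in> S \<and> y \<in> S}" using assms by (auto intro: bdd_aboveI[of _ B])
qed (use assms in blast)

lemma cheb_rad_lessD:
  assumes "S \<noteq> {}" "cheb_rad d S < s"
  shows "\<exists>x\<in>S. rad_pt d x S < s"
  using assms cInf_lessD[of "{rad_pt d x S | x. x \<in> S}" s] unfolding cheb_rad_def by blast

lemma orbit_subset:
  assumes "T ` K \<subseteq> K" "y \<in> K"
  shows "orbit T y \<subseteq> K"
proof -
  have "(T ^^ n) y \<in> K" for n by (induction n) (use assms in auto)
  then show ?thesis unfolding orbit_def by blast
qed

lemma orbit_nonempty: "orbit T y \<noteq> {}"
  unfolding orbit_def by blast

definition cheb_centres :: "('a \<Rightarrow> 'a \<Rightarrow> real) \<Rightarrow> 'a set \<Rightarrow> 'a set" where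
  "cheb_centres d K = {x \<in> K. \<forall>y\<in>K. d x y \<le> cheb_rad d K}"

definition invariant_admissible ::
    "'a set \<Rightarrow> ('a \<Rightarrow> 'a \<Rightarrow> real) \<Rightarrow> ('a \<Rightarrow> 'a) \<Rightarrow> 'a set \<Rightarrow> bool" where
  "invariant_admissible M d T A \<longleftrightarrow> admissible M d A \<and> A \<noteq> {} \<and> T ` A \<subseteq> A"

definition minimal_invariant_admissible ::
    "'a set \<Rightarrow> ('a \<Rightarrow> 'a \<Rightarrow> real) \<Rightarrow> ('a \<Rightarrow> 'a) \<Rightarrow> 'a set \<Rightarrow> bool" where
  "minimal_invariant_admissible M d T K \<longleftrightarrow> invariant_admissible M d T K \<and>
     (\<forall>A. invariant_admissible M d T A \<longrightarrow> A \<subseteq> K \<longrightarrow> A = K)"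

lemma minimal_invariant_admissible_exists:
  assumes "adm_compact M d" "bounded_metric M d" "M \<noteq> {}" "T ` M \<subseteq> M"
  shows "\<exists>K. minimal_invariant_admissible M d T K"
proof -
  have "\<exists>K\<in>Collect (invariant_admissible M d T).
      \<forall>A\<in>Collect (invariant_admissible M d T). A \<subseteq> K \<longrightarrow> A = K"
  proof (rule Zorn_Inter_minimal)
    show "Collect (invariant_admissible M d T) \<noteq> {}"
      using assms(2-4) admissible_space unfolding invariant_admissible_def by blast
  next
    fix \<C> assume "\<C> \<noteq> {}" "subset.chain (Collect (invariant_admissible M d T)) \<C>"
    then have \<C>: "\<C> \<noteq> {}" "\<And>A. A \<in> \<C> \<Longrightarrow> invariant_admissible M d T A"
      "\<forall>A\<in>\<C>. \<forall>B\<in>\<C>. A \<subseteq> B \<or> B \<subseteq> A"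
      by (auto simp: subset_chain_def)
    have "\<Inter>\<C> \<noteq> {}"
      using \<C> by (intro adm_compactD[OF assms(1)]) (auto simp: invariant_admissible_def)
    moreover have "admissible M d (\<Inter>\<C>)"
      using \<C> by (intro admissible_Inter) (auto simp: invariant_admissible_def)
    moreover have "T ` \<Inter>\<C> \<subseteq> \<Inter>\<C>"
      using \<C>(2) unfolding invariant_admissible_def by blast
    ultimately show "\<Inter>\<C> \<in> Collect (invariant_admissible M d T)"
      by (simp add: invariant_admissible_def)
  qed
  then show ?thesis unfolding minimal_invariant_admissible_def by blast
qed

context Metric_space
begin

lemma cheb_rad_nonneg:
  assumes "S \<noteq> {}" "\<forall>u\<in>S. \<forall>v\<in>S. d u v \<le> B"
  shows "0 \<le> cheb_rad d S"
  unfolding cheb_rad_def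
proof (rule cInf_greatest)
  fix r assume "r \<in> {rad_pt d x S |x. x \<in> S}"
  then obtain x where "x \<in> S" "r = rad_pt d x S" by blast
  then show "0 \<le> r" using le_rad_pt[OF assms(2), of x x] nonneg[of x x] by linarith
qed (use assms(1) in blast)

lemma admissible_closed_ball:
  assumes "x \<in> M" "0 \<le> r"
  shows "admissible M d {y \<in> M. d x y \<le> r}"
proof -
  have "d y z \<le> 2 * r" if "y \<in> M" "z \<in> M" "d x y \<le> r" "d x z \<le> r" for y z
    using triangle[of y x z] commute[of x y] that assms(1) by linarith
  moreover have "{y \<in> M. d x y \<le> r} \<in> closed_balls M d"
    using assms unfolding closed_balls_def by blast
  ultimately show ?thesis unfolding admissible_def by blast
qed

lemma admissible_centres:
  assumes "admissible M d K" "0 \<le> s"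
  shows "admissible M d {x \<in> K. \<forall>y\<in>K. d x y \<le> s}"
proof -
  have "K \<subseteq> M" using assms(1) unfolding admissible_def by blast
  then have "{x \<in> K. \<forall>y\<in>K. d x y \<le> s} = \<Inter>(insert K ((\<lambda>y. {z \<in> M. d y z \<le> s}) ` K))"
    by (auto simp: commute)
  also have "admissible M d \<dots>"
    using assms \<open>K \<subseteq> M\<close> by (intro admissible_Inter) (auto intro: admissible_closed_ball)
  finally show ?thesis .
qed

lemma cheb_centres_nonempty:
  assumes "adm_compact M d" "admissible M d K" "K \<noteq> {}"
  shows "cheb_centres d K \<noteq> {}"
proof -
  obtain B where B: "\<forall>u\<in>K. \<forall>v\<in>K. d u v \<le> B" using assms(2) unfolding admissible_def by blast
  define S where "S e = {x \<in> K. \<forall>y\<in>K. d x y \<le> cheb_rad d K + e}" for e :: real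
  have S_nonempty: "S e \<noteq> {}" if "0 < e" for e
  proof -
    from \<open>0 < e\<close> obtain x where "x \<in> K" "rad_pt d x K < cheb_rad d K + e"
      using cheb_rad_lessD[OF assms(3), of d "cheb_rad d K + e"] by auto
    then have "x \<in> S e" using le_rad_pt[OF B] unfolding S_def by fastforce
    then show ?thesis by blast
  qed
  have S_admissible: "admissible M d (S e)" if "0 < e" for e
    unfolding S_def using cheb_rad_nonneg[OF assms(3) B] that
    by (intro admissible_centres[OF assms(2)]) simp
  have S_mono: "S e \<subseteq> S e'" if "e \<le> e'" for e e'
    unfolding S_def using that by fastforce
  have S_chain: "\<forall>A\<in>S ` {0<..}. \<forall>A'\<in>S ` {0<..}. A \<subseteq> A' \<or> A' \<subseteq> A"
  proof (intro ballI)
    fix A A' assume "A \<in> S ` {0<..}" "A' \<in> S ` {0<..}"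
    then obtain e e' where "A = S e" "A' = S e'" by blast
    then show "A \<subseteq> A' \<or> A' \<subseteq> A" using S_mono[of e e'] S_mono[of e' e] by (meson linorder_le_cases)
  qed
  have "\<Inter>(S ` {0<..}) \<noteq> {}"
  proof (rule adm_compactD[OF assms(1) _ _ S_chain])
    show "S ` {0<..} \<noteq> {}" by simp
    show "\<And>A. A \<in> S ` {0<..} \<Longrightarrow> admissible M d A \<and> A \<noteq> {}"
      using S_nonempty S_admissible by blast
  qed
  moreover have "\<Inter>(S ` {0<..}) \<subseteq> cheb_centres d K"
  proof
    fix x assume x: "x \<in> \<Inter>(S ` {0<..})"
    have x_S: "x \<in> S e" if "0 < e" for e using x that by blast
    have "x \<in> K" using x_S[of 1] unfolding S_def by simp
    moreover have "d x y \<le> cheb_rad d K" if "y \<in> K" for y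
    proof (rule field_le_epsilon)
      fix e :: real assume "0 < e"
      then show "d x y \<le> cheb_rad d K + e" using x_S[of e] \<open>y \<in> K\<close> unfolding S_def by blast
    qed
    ultimately show "x \<in> cheb_centres d K" unfolding cheb_centres_def by blast
  qed
  ultimately show ?thesis by blast
qed

lemma minimal_invariant_admissible_closed_ball:
  assumes K: "minimal_invariant_admissible M d T K"
    and "x \<in> M" "0 \<le> r" "T ` K \<subseteq> {y \<in> M. d x y \<le> r}"
  shows "K \<subseteq> {y \<in> M. d x y \<le> r}"
proof -
  let ?B = "{y \<in> M. d x y \<le> r}"
  have inv: "admissible M d K" "K \<noteq> {}" "T ` K \<subseteq> K"
    using K unfolding minimal_invariant_admissible_def invariant_admissible_def by auto
  have "invariant_admissible M d T (K \<inter> ?B)"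
    unfolding invariant_admissible_def
  proof (intro conjI)
    show "admissible M d (K \<inter> ?B)"
      using inv(1) admissible_closed_ball[OF assms(2,3)] by (rule admissible_Int)
    show "K \<inter> ?B \<noteq> {}" using inv(2,3) assms(4) by blast
    show "T ` (K \<inter> ?B) \<subseteq> K \<inter> ?B" using inv(3) assms(4) by blast
  qed
  then have "K \<inter> ?B = K" using K unfolding minimal_invariant_admissible_def by blast
  then show ?thesis by blast
qed

lemma minimal_invariant_admissible_cheb_centres:
  assumes "adm_compact M d" "orbitally_wrt_nonexpansive M d T"
    and K: "minimal_invariant_admissible M d T K"
  shows "cheb_centres d K = K"
proof -
  have inv: "admissible M d K" "K \<noteq> {}" "T ` K \<subseteq> K"
    using K unfolding minimal_invariant_admissible_def invariant_admissible_def by auto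
  obtain B where B: "\<forall>u\<in>K. \<forall>v\<in>K. d u v \<le> B" "K \<subseteq> M"
    using inv(1) unfolding admissible_def by blast
  have r_nonneg: "0 \<le> cheb_rad d K" using cheb_rad_nonneg[OF inv(2) B(1)] .
  have "T x \<in> cheb_centres d K" if x: "x \<in> cheb_centres d K" for x
  proof -
    have "x \<in> K" using x unfolding cheb_centres_def by blast
    have "d (T x) (T y) \<le> cheb_rad d K" if "y \<in> K" for y
    proof -
      have "d (T x) (T y) \<le> rad_pt d x (orbit T y)"
        using assms(2) \<open>x \<in> K\<close> \<open>y \<in> K\<close> B(2) unfolding orbitally_wrt_nonexpansive_def by blast
      also have "\<dots> \<le> cheb_rad d K"
        using orbit_subset[OF inv(3) \<open>y \<in> K\<close>] x
        by (intro rad_pt_le[OF orbit_nonempty]) (auto simp: cheb_centres_def)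
      finally show ?thesis .
    qed
    then have "T ` K \<subseteq> {y \<in> M. d (T x) y \<le> cheb_rad d K}" using inv(3) B(2) by blast
    moreover have "T x \<in> K" using \<open>x \<in> K\<close> inv(3) by blast
    ultimately have "K \<subseteq> {y \<in> M. d (T x) y \<le> cheb_rad d K}"
      using minimal_invariant_admissible_closed_ball[OF K] r_nonneg B(2) by blast
    with \<open>T x \<in> K\<close> show ?thesis unfolding cheb_centres_def by blast
  qed
  then have "invariant_admissible M d T (cheb_centres d K)"
    using admissible_centres[OF inv(1) r_nonneg] cheb_centres_nonempty[OF assms(1) inv(1,2)]
    unfolding invariant_admissible_def cheb_centres_def by blast
  moreover have "cheb_centres d K \<subseteq> K" unfolding cheb_centres_def by blast
  ultimately show ?thesis using K unfolding minimal_invariant_admissible_def by blast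
qed

lemma adm_normal_singleton:
  assumes "adm_normal M d" "admissible M d K" "K \<noteq> {}" "diam d K \<le> cheb_rad d K"
  shows "\<exists>x. K = {x}"
proof -
  obtain B where B: "\<forall>u\<in>K. \<forall>v\<in>K. d u v \<le> B" "K \<subseteq> M"
    using assms(2) unfolding admissible_def by blast
  have "\<not> diam d K > 0" using assms unfolding adm_normal_def by fastforce
  then have "x = y" if "x \<in> K" "y \<in> K" for x y
    using le_diam[OF B(1) that] nonneg[of x y] zero[of x y] that B(2) by fastforce
  then show ?thesis using assms(3) by blast
qed

end

theorem corollary2p4:
  fixes M :: "'a set" and d :: "'a \<Rightarrow> 'a \<Rightarrow> real" and T :: "'a \<Rightarrow> 'a"
  assumes "Metric_space M d" and "M \<noteq> {}" and "bounded_metric M d"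
    and "adm_compact M d" and "adm_normal M d"
    and "\<forall>x\<in>M. T x \<in> M"
    and "orbitally_wrt_nonexpansive M d T"
  shows "\<exists>x\<in>M. T x = x"
proof -
  interpret Metric_space M d by fact
  obtain K where K: "minimal_invariant_admissible M d T K"
    using minimal_invariant_admissible_exists[OF assms(4,3,2)] assms(6) by blast
  then have inv: "admissible M d K" "K \<noteq> {}" "T ` K \<subseteq> K"
    unfolding minimal_invariant_admissible_def invariant_admissible_def by auto
  have "cheb_centres d K = K"
    using minimal_invariant_admissible_cheb_centres[OF assms(4,7) K] .
  then have "diam d K \<le> cheb_rad d K"
    using inv(2) by (intro diam_le) (auto simp: cheb_centres_def)
  then obtain x where "K = {x}" using adm_normal_singleton[OF assms(5) inv(1,2)] by blast
  moreover have "K \<subseteq> M" using inv(1) unfolding admissible_def by blast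
  ultimately show ?thesis using inv(3) by blast
qed

end
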